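(* Let $\gamma_X$ be any dynamic metric space and $k\in\mathbf{Z}_+$. For any $\mathbf{a},\mathbf{b}\in\mathbf{R}^6_\times$ with $\mathbf{a}\le\mathbf{b}$ in $\mathbf{R}^6_\times$, one has $\mathrm{rk}_k(\gamma_X)(\mathbf{a})\ge\mathrm{rk}_k(\gamma_X)(\mathbf{b})$ in $\mathbf{Z}_+\cup\{\infty\}$.
   Context: A dynamic metric space (DMS) is a pair $\gamma_X=(X,d_X(\cdot))$ where $X$ is a nonempty finite set and $d_X(\cdot):\mathbf{R}\times X\times X\to\mathbf{R}_+$ satisfies: each $d_X(t)$ is a pseudometric, some $d_X(t_0)$ is a metric, and $t\mapsto d_X(t)(x,x')$ is continuous for all $x,x'$. For a closed interval $I$, $(\bigvee_I d_X)(x,x'):=\min_{s\in I}d_X(s)(x,x')$. For symmetric $d:X\times X\to\mathbf{R}_+$ vanishing on the diagonal, $\mathcal{R}_\delta(X,d)$ is the simplicial complex on $X$ whose simplices are the nonempty $\sigma$ with $d(x,x')\le\delta$ for all $x,x'\in\sigma$; $\mathrm{H}_k$ is simplicial homology over a fixed field. $\mathbf{R}^6_\times$ denotes $\mathbf{R}^6$ with the product order of $\mathbf{R}\times\mathbf{R}^{\mathrm{op}}\times\mathbf{R}^{\mathrm{op}}\times\mathbf{R}^{\mathrm{op}}\times\mathbf{R}\times\mathbf{R}$, i.e. $\mathbf{a}\le\mathbf{b}$ iff $a_1\le b_1$, $a_2\ge b_2$, $a_3\ge b_3$, $a_4\ge b_4$, $a_5\le b_5$, $a_6\le b_6$. A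 vector $\mathbf{a}=(a_1,\dots,a_6)$ is admissible if $a_1\le a_2$, $a_4\le a_5$, $a_3,a_6\ge0$, $[a_1,a_2]\subseteq[a_4,a_5]$ and $a_3\le a_6$; otherwise non-admissible; it is trivially non-admissible if there is no admissible $\mathbf{b}$ with $\mathbf{b}<\mathbf{a}$ in $\mathbf{R}^6_\times$. The (adapted) $k$-th rank invariant $\mathrm{rk}_k(\gamma_X):\mathbf{R}^6\to\mathbf{Z}_+\cup\{\infty\}$ is: the rank of the linear map $\mathrm{H}_k(\mathcal{R}_{a_3}(X,\bigvee_{[a_1,a_2]}d_X)\hookrightarrow\mathcal{R}_{a_6}(X,\bigvee_{[a_4,a_5]}d_X))$ if $\mathbf{a}$ is admissible; $\infty$ if $\mathbf{a}$ is trivially non-admissible; $0$ otherwise. *)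

theory Defs
  imports Complex_Main "HOL-Library.Extended_Nat" "HOL-Library.Function_Algebras"
begin

definition is_pseudometric_on :: "'a set \<Rightarrow> ('a \<Rightarrow> 'a \<Rightarrow> real) \<Rightarrow> bool" where
  "is_pseudometric_on X d \<longleftrightarrow>
     (\<forall>x\<in>X. d x x = 0) \<and>
     (\<forall>x\<in>X. \<forall>y\<in>X. d x y \<ge> 0 \<and> d x y = d y x) \<and>
     (\<forall>x\<in>X. \<forall>y\<in>X. \<forall>z\<in>X. d x z \<le> d x y + d y z)"

definition is_metric_on :: "'a set \<Rightarrow> ('a \<Rightarrow> 'a \<Rightarrow> real) \<Rightarrow> bool" where
  "is_metric_on X d \<longleftrightarrow> is_pseudometric_on X d \<and> (\<forall>x\<in>X. \<forall>y\<in>X. d x y = 0 \<longrightarrow> x = y)"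

definition is_DMS :: "'a set \<Rightarrow> (real \<Rightarrow> 'a \<Rightarrow> 'a \<Rightarrow> real) \<Rightarrow> bool" where
  "is_DMS X d \<longleftrightarrow> finite X \<and> X \<noteq> {} \<and>
     (\<forall>t. is_pseudometric_on X (d t)) \<and>
     (\<exists>t0. is_metric_on X (d t0)) \<and>
     (\<forall>x\<in>X. \<forall>y\<in>X. continuous_on UNIV (\<lambda>t. d t x y))"

definition interval_min :: "(real \<Rightarrow> 'a \<Rightarrow> 'a \<Rightarrow> real) \<Rightarrow> real \<Rightarrow> real \<Rightarrow> 'a \<Rightarrow> 'a \<Rightarrow> real" where
  "interval_min d a b x y = Inf ((\<lambda>s. d s x y) ` {a..b})"

definition rips :: "'a set \<Rightarrow> ('a \<Rightarrow> 'a \<Rightarrow> real) \<Rightarrow> real \<Rightarrow> 'a set set" where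
  "rips X d \<delta> = {\<sigma>. \<sigma> \<subseteq> X \<and> \<sigma> \<noteq> {} \<and> (\<forall>x\<in>\<sigma>. \<forall>y\<in>\<sigma>. d x y \<le> \<delta>)}"

text \<open>Simplicial k-chains of a complex K with coefficients in a field 'f, as
  coefficient functions on simplices supported on the k-simplices of K.\<close>
definition chains :: "'a set set \<Rightarrow> nat \<Rightarrow> ('a set \<Rightarrow> 'f::field) set" where
  "chains K k = {c. \<forall>\<sigma>. c \<sigma> \<noteq> 0 \<longrightarrow> \<sigma> \<in> K \<and> card \<sigma> = Suc k}"

text \<open>Simplicial boundary, simplices oriented by the linear order on vertices:
  the face of \<sigma> omitting its i-th vertex (0-based, increasing order) gets sign (-1)^i.\<close>
definition bdry :: "'a::linorder set \<Rightarrow> ('a set \<Rightarrow> 'f::field) \<Rightarrow> ('a set \<Rightarrow> 'f)" where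
  "bdry X c = (\<lambda>\<tau>. \<Sum>x\<in>X - \<tau>. (- 1) ^ card {y\<in>\<tau>. y < x} * c (insert x \<tau>))"

definition cycles :: "'a::linorder set \<Rightarrow> 'a set set \<Rightarrow> nat \<Rightarrow> ('a set \<Rightarrow> 'f::field) set" where
  "cycles X K k = {c \<in> chains K k. k = 0 \<or> bdry X c = (\<lambda>_. 0)}"

definition boundaries :: "'a::linorder set \<Rightarrow> 'a set set \<Rightarrow> nat \<Rightarrow> ('a set \<Rightarrow> 'f::field) set" where
  "boundaries X K k = bdry X ` chains K (Suc k)"

abbreviation fscale :: "'f::field \<Rightarrow> ('a set \<Rightarrow> 'f) \<Rightarrow> ('a set \<Rightarrow> 'f)" where
  "fscale r c \<equiv> (\<lambda>\<sigma>. r * c \<sigma>)"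

text \<open>Rank of H_k(K) \<rightarrow> H_k(L) induced by an inclusion K \<subseteq> L:
  the dimension of the image of Z_k(K) in Z_k(L)/B_k(L), i.e.
  dim (Z_k(K) + B_k(L)) - dim B_k(L).\<close>
definition incl_rank :: "'f::field itself \<Rightarrow> 'a::linorder set \<Rightarrow> nat \<Rightarrow> 'a set set \<Rightarrow> 'a set set \<Rightarrow> nat" where
  "incl_rank F X k K L =
     vector_space.dim (fscale :: 'f \<Rightarrow> _) (cycles X K k \<union> boundaries X L k)
     - vector_space.dim (fscale :: 'f \<Rightarrow> _) (boundaries X L k :: ('a set \<Rightarrow> 'f) set)"

type_synonym vec6 = "real \<times> real \<times> real \<times> real \<times> real \<times> real"

definition le6 :: "vec6 \<Rightarrow> vec6 \<Rightarrow> bool" where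
  "le6 a b \<longleftrightarrow> (case a of (a1,a2,a3,a4,a5,a6) \<Rightarrow> case b of (b1,b2,b3,b4,b5,b6) \<Rightarrow>
     a1 \<le> b1 \<and> a2 \<ge> b2 \<and> a3 \<ge> b3 \<and> a4 \<ge> b4 \<and> a5 \<le> b5 \<and> a6 \<le> b6)"

definition admissible :: "vec6 \<Rightarrow> bool" where
  "admissible a \<longleftrightarrow> (case a of (a1,a2,a3,a4,a5,a6) \<Rightarrow>
     a1 \<le> a2 \<and> a4 \<le> a5 \<and> a3 \<ge> 0 \<and> a6 \<ge> 0 \<and> {a1..a2} \<subseteq> {a4..a5} \<and> a3 \<le> a6)"

definition trivially_nonadmissible :: "vec6 \<Rightarrow> bool" where
  "trivially_nonadmissible a \<longleftrightarrow> \<not> admissible a \<and> \<not> (\<exists>b. admissible b \<and> le6 b a \<and> b \<noteq> a)"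

definition rank_inv :: "'f::field itself \<Rightarrow> 'a::linorder set \<Rightarrow> (real \<Rightarrow> 'a \<Rightarrow> 'a \<Rightarrow> real) \<Rightarrow> nat \<Rightarrow> vec6 \<Rightarrow> enat" where
  "rank_inv F X d k a =
     (if admissible a then
        (case a of (a1,a2,a3,a4,a5,a6) \<Rightarrow>
          enat (incl_rank F X k (rips X (interval_min d a1 a2) a3) (rips X (interval_min d a4 a5) a6)))
      else if trivially_nonadmissible a then \<infinity> else 0)"

end

theory Submission
  imports Defs
begin

(* If a \<le> b are both admissible, minimizing distances over a larger time interval only lowers
   them, so the source complex of b lies in that of a and the target complex of a in that of b.
   The rank dim (Z + B) - dim B of cycles Z modulo boundaries B drops when Z shrinks or B grows,
   by a Grassmann-type inequality.  The conventions for non-admissible vectors are compatible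
   with the order because "lies above some admissible vector" is upward closed: vectors outside
   this set get rank \<infinity>, non-admissible ones inside it get rank 0, and an admissible b above
   such an a forces a to be admissible itself. *)

context vector_space
begin

(* The finiteness of W matters: dim is 0 on infinite-dimensional sets. *)
lemma dim_mono_in_finite_span:
  assumes "A \<subseteq> span B" "B \<subseteq> span W" "finite W"
  shows "dim A \<le> dim B"
proof -
  obtain BB where BB: "BB \<subseteq> B" "independent BB" "B \<subseteq> span BB" "card BB = dim B"
    using basis_exists by blast
  have "finite BB"
    using independent_span_bound[OF \<open>finite W\<close> BB(2)] BB(1) assms(2) by blast
  moreover have "A \<subseteq> span BB"
    using assms(1) BB(3) by (metis span_mono span_span subset_trans)
  ultimately show ?thesis
    using dim_le_card BB(4) by metis
qed

lemma dim_Un_add_dim_le: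
  assumes "S \<subseteq> span T" "U \<union> T \<subseteq> span W" "finite W"
  shows "dim (U \<union> T) + dim S \<le> dim (U \<union> S) + dim T"
proof -
  \<comment> \<open>A basis of S extends both to a basis of span T and to one of span (U \<union> S).\<close>
  obtain BS where BS: "BS \<subseteq> S" "independent BS" "S \<subseteq> span BS" "card BS = dim S"
    using basis_exists by blast
  have "BS \<subseteq> span T"
    using BS(1) assms(1) by blast
  then obtain BT where BT: "BS \<subseteq> BT" "BT \<subseteq> span T" "independent BT" "span T \<subseteq> span BT"
    using maximal_independent_subset_extend[of BS "span T"] BS(2) by blast
  have "BS \<subseteq> span (U \<union> S)"
    using BS(1) span_superset by blast
  then obtain BU where BU: "BS \<subseteq> BU" "BU \<subseteq> span (U \<union> S)" "independent BU" "span (U \<union> S) \<subseteq> span BU"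
    using maximal_independent_subset_extend[of BS "span (U \<union> S)"] BS(2) by blast
  have TW: "span T \<subseteq> span W"
    using assms(2) by (simp add: span_minimal subspace_span)
  have "U \<union> S \<subseteq> span W"
    using assms(1,2) TW by blast
  then have "span (U \<union> S) \<subseteq> span W"
    by (simp add: span_minimal subspace_span)
  then have fin: "finite BT" "finite BU"
    using independent_span_bound[OF \<open>finite W\<close>] BT(2,3) BU(2,3) TW by blast+
  have "U \<union> T \<subseteq> span (BU \<union> BT)"
    using BU(4) BT(4) span_superset span_mono[of BU "BU \<union> BT"] span_mono[of BT "BU \<union> BT"] by blast
  then have "dim (U \<union> T) \<le> card (BU \<union> BT)"
    using dim_le_card fin by blast
  moreover have "card (BU \<union> BT) + card (BU \<inter> BT) = card BU + card BT"
    using card_Un_Int[OF fin(2,1)] by simp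
  moreover have "card BS \<le> card (BU \<inter> BT)"
    using BU(1) BT(1) fin by (intro card_mono) auto
  moreover have "card BT = dim T" "card BU = dim (U \<union> S)"
    using basis_card_eq_dim[OF BT(2,4,3)] basis_card_eq_dim[OF BU(2,4,3)] by simp_all
  ultimately show ?thesis
    using BS(4) by linarith
qed

lemma dim_Un_diff_dim_mono:
  assumes "Z' \<subseteq> Z" "B \<subseteq> B'" "Z \<subseteq> span W" "B' \<subseteq> span W" "finite W"
  shows "dim (Z' \<union> B') - dim B' \<le> dim (Z \<union> B) - dim B"
proof -
  have ZB: "Z \<union> B \<subseteq> span W" and ZB': "Z' \<union> B' \<subseteq> span W"
    using assms(1-4) by blast+
  have "dim (Z' \<union> B') + dim B \<le> dim (Z' \<union> B) + dim B'"
    using dim_Un_add_dim_le[OF subset_trans[OF assms(2) span_superset] ZB' \<open>finite W\<close>] .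
  moreover have "dim (Z' \<union> B) \<le> dim (Z \<union> B)" "dim B \<le> dim (Z \<union> B)"
    using assms(1)
    by (intro dim_mono_in_finite_span[OF _ ZB \<open>finite W\<close>] subset_trans[OF _ span_superset]; blast)+
  moreover have "dim B' \<le> dim (Z' \<union> B')"
    by (intro dim_mono_in_finite_span[OF _ ZB' \<open>finite W\<close>] subset_trans[OF _ span_superset]) blast
  ultimately show ?thesis
    by linarith
qed

end

lemma sum_fun_apply: "(\<Sum>a\<in>A. f a) x = (\<Sum>a\<in>A. f a x)"
  by (induction A rule: infinite_finite_induct) auto

interpretation function_space: vector_space "\<lambda>(r::'f::field) (c :: 'b \<Rightarrow> 'f) x. r * c x"
  by unfold_locales (auto simp: fun_eq_iff algebra_simps)

lemma finite_support_in_span_indicators: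
  fixes c :: "'b \<Rightarrow> 'f::field"
  assumes "finite S" "\<And>x. c x \<noteq> 0 \<Longrightarrow> x \<in> S"
  shows "c \<in> function_space.span ((\<lambda>s x. of_bool (x = s)) ` S)"
proof -
  have "c = (\<Sum>s\<in>S. (\<lambda>x. c s * of_bool (x = s)))"
  proof
    fix x
    show "c x = (\<Sum>s\<in>S. (\<lambda>x. c s * of_bool (x = s))) x"
      using assms by (cases "x \<in> S") (auto simp: sum_fun_apply)
  qed
  also have "\<dots> \<in> function_space.span ((\<lambda>s x. of_bool (x = s)) ` S)"
    by (intro function_space.span_sum function_space.span_scale function_space.span_base) auto
  finally show ?thesis .
qed

lemma chains_mono: "K \<subseteq> L \<Longrightarrow> chains K k \<subseteq> chains L k"
  unfolding chains_def by auto

lemma cycles_mono: "K \<subseteq> L \<Longrightarrow> cycles X K k \<subseteq> cycles X L k"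
  unfolding cycles_def using chains_mono by blast

lemma boundaries_mono: "K \<subseteq> L \<Longrightarrow> boundaries X K k \<subseteq> boundaries X L k"
  unfolding boundaries_def using chains_mono by blast

lemma cycles_support: "c \<in> cycles X K k \<Longrightarrow> c \<sigma> \<noteq> 0 \<Longrightarrow> \<sigma> \<in> K"
  unfolding cycles_def chains_def by auto

lemma boundaries_support:
  assumes "c \<in> boundaries X K k" "c \<tau> \<noteq> 0"
  obtains x where "insert x \<tau> \<in> K"
proof -
  obtain e where e: "e \<in> chains K (Suc k)" "c = bdry X e"
    using assms(1) unfolding boundaries_def by blast
  have "(\<Sum>x\<in>X - \<tau>. (- 1) ^ card {y\<in>\<tau>. y < x} * e (insert x \<tau>)) \<noteq> 0"
    using assms(2) e(2) unfolding bdry_def by simp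
  then obtain x where "e (insert x \<tau>) \<noteq> 0"
    by (metis (no_types, lifting) mult_zero_right sum.neutral)
  then show thesis
    using that e(1) unfolding chains_def by blast
qed

lemma incl_rank_mono:
  fixes X :: "'a::linorder set"
  assumes "finite X" "K' \<subseteq> K" "L \<subseteq> L'" "K \<subseteq> Pow X" "L' \<subseteq> Pow X"
  shows "incl_rank TYPE('f::field) X k K' L' \<le> incl_rank TYPE('f) X k K L"
proof -
  let ?W = "(\<lambda>s x. of_bool (x = s)) ` Pow X :: ('a set \<Rightarrow> 'f) set"
  have fin: "finite (Pow X)"
    using assms(1) by simp
  have Z: "(cycles X K k :: ('a set \<Rightarrow> 'f) set) \<subseteq> function_space.span ?W"
  proof
    fix c :: "'a set \<Rightarrow> 'f" assume "c \<in> cycles X K k"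
    with assms(4) show "c \<in> function_space.span ?W"
      by (intro finite_support_in_span_indicators[OF fin]) (auto dest: cycles_support)
  qed
  have B: "(boundaries X L' k :: ('a set \<Rightarrow> 'f) set) \<subseteq> function_space.span ?W"
  proof
    fix c :: "'a set \<Rightarrow> 'f" assume c: "c \<in> boundaries X L' k"
    show "c \<in> function_space.span ?W"
    proof (rule finite_support_in_span_indicators[OF fin])
      fix \<tau> assume "c \<tau> \<noteq> 0"
      with c obtain x where "insert x \<tau> \<in> L'"
        by (rule boundaries_support)
      then show "\<tau> \<in> Pow X"
        using assms(5) by blast
    qed
  qed
  show ?thesis
    unfolding incl_rank_def
    by (rule function_space.dim_Un_diff_dim_mono[OF cycles_mono[OF assms(2)] boundaries_mono[OF assms(3)]
          Z B finite_imageI[OF fin]])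
qed

lemma rips_mono:
  assumes "\<And>x y. x \<in> X \<Longrightarrow> y \<in> X \<Longrightarrow> d' x y \<le> d x y" "\<delta> \<le> \<delta>'"
  shows "rips X d \<delta> \<subseteq> rips X d' \<delta>'"
  unfolding rips_def using assms by auto (meson order_trans subsetD)

lemma rips_subset_Pow: "rips X d \<delta> \<subseteq> Pow X"
  unfolding rips_def by auto

lemma interval_min_antimono:
  assumes "\<And>s. 0 \<le> d s x y" "b1 \<le> b2" "{b1..b2} \<subseteq> {a1..a2}"
  shows "interval_min d a1 a2 x y \<le> interval_min d b1 b2 x y"
  unfolding interval_min_def
  using assms by (intro cInf_superset_mono bdd_belowI[where m = 0]) auto

lemma rank_inv_admissible_mono:
  assumes "is_DMS X d" "admissible a" "admissible b" "le6 a b"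
  shows "rank_inv TYPE('f::field) X d k b \<le> rank_inv TYPE('f) X d k a"
proof -
  obtain a1 a2 a3 a4 a5 a6 where a: "a = (a1,a2,a3,a4,a5,a6)" by (cases a) auto
  obtain b1 b2 b3 b4 b5 b6 where b: "b = (b1,b2,b3,b4,b5,b6)" by (cases b) auto
  have nonneg: "\<And>s x y. x \<in> X \<Longrightarrow> y \<in> X \<Longrightarrow> 0 \<le> d s x y"
    using assms(1) unfolding is_DMS_def is_pseudometric_on_def by blast
  have ineqs: "b1 \<le> b2" "a4 \<le> a5" "a1 \<le> b1" "b2 \<le> a2" "b3 \<le> a3" "b4 \<le> a4" "a5 \<le> b5" "a6 \<le> b6"
    using assms(2-4) unfolding a b admissible_def le6_def by auto
  have K: "rips X (interval_min d b1 b2) b3 \<subseteq> rips X (interval_min d a1 a2) a3"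
    and L: "rips X (interval_min d a4 a5) a6 \<subseteq> rips X (interval_min d b4 b5) b6"
    by (intro rips_mono interval_min_antimono nonneg; use ineqs in simp)+
  have "finite X"
    using assms(1) unfolding is_DMS_def by blast
  from incl_rank_mono[OF this K L rips_subset_Pow rips_subset_Pow, where 'f = 'f and k = k]
  show ?thesis
    using assms(2,3) unfolding rank_inv_def a b by simp
qed

lemma le6_refl: "le6 a a"
  unfolding le6_def by (cases a) auto

lemma le6_trans: "le6 a b \<Longrightarrow> le6 b c \<Longrightarrow> le6 a c"
  unfolding le6_def by (cases a; cases b; cases c) auto

lemma admissible_between:
  assumes "admissible c" "le6 c a" "le6 a b" "admissible b"
  shows "admissible a"
  using assms unfolding admissible_def le6_def by (cases a; cases b; cases c) auto

lemma not_trivially_nonadmissible_iff: "\<not> trivially_nonadmissible a \<longleftrightarrow> (\<exists>c. admissible c \<and> le6 c a)"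
  unfolding trivially_nonadmissible_def using le6_refl by blast

theorem proposition4p3:
  fixes X :: "'a::linorder set" and d :: "real \<Rightarrow> 'a \<Rightarrow> 'a \<Rightarrow> real"
    and k :: nat and a b :: vec6
  assumes "is_DMS X d"
    and "le6 a b"
  shows "rank_inv TYPE('f::field) X d k a \<ge> rank_inv TYPE('f) X d k b"
proof (cases "trivially_nonadmissible a")
  case True
  then show ?thesis
    unfolding rank_inv_def trivially_nonadmissible_def by simp
next
  case False
  then obtain c where c: "admissible c" "le6 c a"
    using not_trivially_nonadmissible_iff by blast
  show ?thesis
  proof (cases "admissible b")
    case True
    then show ?thesis
      using rank_inv_admissible_mono admissible_between c assms by blast
  next
    case False
    moreover have "\<not> trivially_nonadmissible b"
      using not_trivially_nonadmissible_iff c le6_trans assms(2) by blast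
    ultimately show ?thesis
      unfolding rank_inv_def by simp
  qed
qed

end
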